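(* Let $\Delta$ be a smooth convex polygon with more than four edges. (i) If $e$ and $e'$ are parallel edges, then there is an edge, different from $e$ and $e'$ and not adjacent to $e$, which can be blown down. (ii) If $e,e',e''$ are consecutive adjacent edges with outward conormals $\alpha,\alpha',\alpha''$, and $\alpha'$ is not a positive linear combination of $\alpha$ and $\alpha''$, then there is an edge different from $e,e',e''$ which can be blown down.
   Context: A smooth polygon is a convex polygon $\bigcap_i\{x\in(\mathbb R^2)^*\mid\langle\eta_i,x\rangle\le\kappa_i\}$ whose primitive outward conormals at each vertex form a basis of $\mathbb Z^2$. An edge can be blown down if the polygon is the blowup of a smooth polygon at a vertex with that edge as exceptional divisor; for smooth polygons this holds exactly when the outward conormal of the edge equals the sum of the outward conormals of the two adjacent edges. (Blowup at a vertex $F_1\cap F_2$: intersect with $\{\langle\eta_1+\eta_2,x\rangle\le\kappa_1+\kappa_2-\epsilon\}$, $\epsilon>0$ small.) *)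

theory Defs
  imports "HOL-Analysis.Analysis"
begin

text \<open>A polygon with n edges is described by its outward conormals
  eta i :: int \<times> int and constants kappa i, for i < n, listed in cyclic order
  (indices modulo n).  Points live in real \<times> real (the dual plane).\<close>

definition pairing :: "int \<times> int \<Rightarrow> real \<times> real \<Rightarrow> real" where
  "pairing v x = of_int (fst v) * fst x + of_int (snd v) * snd x"

definition nxt :: "nat \<Rightarrow> nat \<Rightarrow> nat" where
  "nxt n i = (i + 1) mod n"

definition prv :: "nat \<Rightarrow> nat \<Rightarrow> nat" where
  "prv n i = (i + n - 1) mod n"

definition det2 :: "int \<times> int \<Rightarrow> int \<times> int \<Rightarrow> int" where
  "det2 v w = fst v * snd w - snd v * fst w"

definition primitive :: "int \<times> int \<Rightarrow> bool" where
  "primitive v \<longleftrightarrow> gcd (fst v) (snd v) = 1"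

definition polygon_set :: "nat \<Rightarrow> (nat \<Rightarrow> int \<times> int) \<Rightarrow> (nat \<Rightarrow> real) \<Rightarrow> (real \<times> real) set" where
  "polygon_set n eta kappa = {x. \<forall>i<n. pairing (eta i) x \<le> kappa i}"

definition edge_set :: "nat \<Rightarrow> (nat \<Rightarrow> int \<times> int) \<Rightarrow> (nat \<Rightarrow> real) \<Rightarrow> nat \<Rightarrow> (real \<times> real) set" where
  "edge_set n eta kappa i = polygon_set n eta kappa \<inter> {x. pairing (eta i) x = kappa i}"

definition smooth_polygon :: "nat \<Rightarrow> (nat \<Rightarrow> int \<times> int) \<Rightarrow> (nat \<Rightarrow> real) \<Rightarrow> bool" where
  "smooth_polygon n eta kappa \<longleftrightarrow>
     n \<ge> 3 \<and>
     bounded (polygon_set n eta kappa) \<and>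
     interior (polygon_set n eta kappa) \<noteq> {} \<and>
     inj_on eta {..<n} \<and>
     (\<forall>i<n. primitive (eta i)) \<and>
     (\<forall>i<n. \<exists>x\<in>edge_set n eta kappa i. \<exists>y\<in>edge_set n eta kappa i. x \<noteq> y) \<and>
     (\<forall>i<n. edge_set n eta kappa i \<inter> edge_set n eta kappa (nxt n i) \<noteq> {}) \<and>
     (\<forall>i<n. \<bar>det2 (eta i) (eta (nxt n i))\<bar> = 1)"

text \<open>Edge i can be blown down: by the criterion for smooth polygons, its conormal is
  the sum of the conormals of the two adjacent edges.\<close>
definition can_blow_down :: "nat \<Rightarrow> (nat \<Rightarrow> int \<times> int) \<Rightarrow> nat \<Rightarrow> bool" where
  "can_blow_down n eta i \<longleftrightarrow>
     fst (eta i) = fst (eta (prv n i)) + fst (eta (nxt n i)) \<and>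
     snd (eta i) = snd (eta (prv n i)) + snd (eta (nxt n i))"

definition adjacent_edges :: "nat \<Rightarrow> nat \<Rightarrow> nat \<Rightarrow> bool" where
  "adjacent_edges n i j \<longleftrightarrow> j = nxt n i \<or> j = prv n i"

definition parallel_edges :: "(nat \<Rightarrow> int \<times> int) \<Rightarrow> nat \<Rightarrow> nat \<Rightarrow> bool" where
  "parallel_edges eta i j \<longleftrightarrow> det2 (eta i) (eta j) = 0"

definition positive_combination :: "int \<times> int \<Rightarrow> int \<times> int \<Rightarrow> int \<times> int \<Rightarrow> bool" where
  "positive_combination v a b \<longleftrightarrow> (\<exists>s t :: real. s > 0 \<and> t > 0 \<and>
      of_int (fst v) = s * of_int (fst a) + t * of_int (fst b) \<and>
      of_int (snd v) = s * of_int (snd a) + t * of_int (snd b))"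

end

theory Submission
  imports Defs
begin

text \<open>After swapping the coordinates if necessary, the conormals v_0, ..., v_{n-1} of a
  smooth polygon form a counterclockwise cycle with det(v_k, v_{k+1}) = 1.  Hence
  v_{k-1} + v_{k+1} = a_k v_k with a_k = det(v_{k-1}, v_{k+1}), and edge k can be blown down
  exactly when a_k = 1; convexity says that no conormal lies in the closed cone spanned by
  two consecutive ones.  Along a stretch with all a_k \<ge> 2 the determinants det(v_0, v_k)
  grow at least linearly, so such a stretch cannot turn through a half plane unless it is
  very short.  In (i) the conormals turn by a half plane from v_e to v_{e'} = -v_e and back;
  in (ii) a_i \<le> 0 forces the conormals after the nonconvex vertex into one half plane.\<close>

lemma det2_antisym: "det2 w v = - det2 v w"
  by (simp add: det2_def)

lemma det2_self [simp]: "det2 v v = 0"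
  by (simp add: det2_def)

lemma det2_uminus_left [simp]: "det2 (- v) w = - det2 v w"
  and det2_uminus_right [simp]: "det2 v (- w) = - det2 v w"
  and det2_diff_right: "det2 v (w - u) = det2 v w - det2 v u"
  and det2_diff_left: "det2 (w - u) v = det2 w v - det2 u v"
  by (simp_all add: det2_def algebra_simps)

lemma det2_swap [simp]: "det2 (prod.swap v) (prod.swap w) = - det2 v w"
  by (simp add: det2_def)

lemma det2_cramer: "det2 q r * det2 x y = det2 y r * det2 x q + det2 q y * det2 x r"
  by (simp add: det2_def algebra_simps)

lemma det2_cramer_components:
  "det2 q r * fst y = det2 y r * fst q + det2 q y * fst r"
  "det2 q r * snd y = det2 y r * snd q + det2 q y * snd r"
  by (simp_all add: det2_def algebra_simps)

lemma det2_three_term: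
  assumes "det2 p q = 1" "det2 q r = 1"
  shows "det2 x p + det2 x r = det2 p r * det2 x q"
  using det2_cramer[of q r x p] assms det2_antisym[of p q] by simp

lemma three_term_components:
  assumes "det2 p q = 1" "det2 q r = 1"
  shows "fst p + fst r = det2 p r * fst q" "snd p + snd r = det2 p r * snd q"
  using det2_cramer_components[of q r p] assms det2_antisym[of p q] by simp_all

lemma positive_combination_if_det2_pos:
  assumes "det2 p q = 1" "det2 q r = 1" "0 < det2 p r"
  shows "positive_combination q p r"
  unfolding positive_combination_def
proof (intro exI conjI)
  let ?d = "real_of_int (det2 p r)"
  show "0 < 1 / ?d" "0 < 1 / ?d" using assms(3) by simp_all
  have "of_int (fst p) + of_int (fst r) = ?d * of_int (fst q)"
    "of_int (snd p) + of_int (snd r) = ?d * of_int (snd q)"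
    using three_term_components[OF assms(1,2)] by (metis of_int_add of_int_mult)+
  then show "of_int (fst q) = 1 / ?d * of_int (fst p) + 1 / ?d * of_int (fst r)"
    "of_int (snd q) = 1 / ?d * of_int (snd p) + 1 / ?d * of_int (snd r)"
    using assms(3) by (simp_all add: field_simps)
qed

definition unimodular_chain :: "nat \<Rightarrow> (nat \<Rightarrow> int \<times> int) \<Rightarrow> bool" where
  "unimodular_chain m X \<longleftrightarrow> (\<forall>k<m. det2 (X k) (X (Suc k)) = 1)"

lemma unimodular_chainD: "unimodular_chain m X \<Longrightarrow> k < m \<Longrightarrow> det2 (X k) (X (Suc k)) = 1"
  by (simp add: unimodular_chain_def)

lemma unimodular_chain_three_term:
  assumes "unimodular_chain m X" "0 < j" "j < m"
  shows "det2 x (X (j - 1)) + det2 x (X (j + 1)) = det2 (X (j - 1)) (X (j + 1)) * det2 x (X j)"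
proof (rule det2_three_term)
  show "det2 (X (j - 1)) (X j) = 1" using unimodular_chainD[OF assms(1), of "j - 1"] assms(2,3) by simp
  show "det2 (X j) (X (j + 1)) = 1" using unimodular_chainD[OF assms(1), of j] assms(3) by simp
qed

lemma unimodular_chain_reverse:
  assumes "unimodular_chain m X"
  shows "unimodular_chain m (\<lambda>k. prod.swap (X (m - k)))"
  unfolding unimodular_chain_def
proof (intro allI impI)
  fix k assume "k < m"
  then have "m - k = Suc (m - Suc k)" by simp
  then show "det2 (prod.swap (X (m - k))) (prod.swap (X (m - Suc k))) = 1"
    using unimodular_chainD[OF assms, of "m - Suc k"] \<open>k < m\<close>
      det2_antisym[of "X (m - Suc k)" "X (m - k)"] by simp
qed

lemma unimodular_chain_turn_pos:
  assumes "unimodular_chain m X" "0 < j" "j < m"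
    and "0 < det2 x (X j)" "0 < det2 x (X (j - 1)) + det2 x (X (j + 1))"
  shows "0 < det2 (X (j - 1)) (X (j + 1))"
proof -
  have "0 < det2 (X (j - 1)) (X (j + 1)) * det2 x (X j)"
    using unimodular_chain_three_term[OF assms(1-3), of x] assms(5) by simp
  then show ?thesis using assms(4) by (simp add: zero_less_mult_iff)
qed

text \<open>Without interior blow-downs X (k-1) + X (k+1) = a X k with a \<ge> 2, so the increments
  of det2 (X 0) (X k) never decrease.\<close>

lemma unimodular_chain_det2_growth:
  assumes chain: "unimodular_chain m X"
    and no_blowdown: "\<And>k. 0 < k \<Longrightarrow> k < m \<Longrightarrow> 2 \<le> det2 (X (k - 1)) (X (k + 1))"
    and "k \<le> m"
  shows "int k \<le> det2 (X 0) (X k)"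
proof -
  let ?d = "\<lambda>k. det2 (X 0) (X k)"
  have growth: "int k \<le> ?d k \<and> ?d k < ?d (Suc k)" if "k < m" for k
    using that
  proof (induction k)
    case 0
    then show ?case using unimodular_chainD[OF chain, of 0] by simp
  next
    case (Suc k)
    then have ih: "int k \<le> ?d k" "?d k < ?d (Suc k)" by simp_all
    have "?d k + ?d (Suc (Suc k)) = det2 (X k) (X (Suc (Suc k))) * ?d (Suc k)"
      using unimodular_chain_three_term[OF chain, of "Suc k"] Suc.prems by simp
    moreover have "2 * ?d (Suc k) \<le> det2 (X k) (X (Suc (Suc k))) * ?d (Suc k)"
      using no_blowdown[of "Suc k"] Suc.prems ih by (intro mult_right_mono) auto
    ultimately show ?case using ih by linarith
  qed
  show ?thesis
  proof (cases k)
    case (Suc k')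
    then have "k' < m" using \<open>k \<le> m\<close> by simp
    then show ?thesis using growth[of k'] Suc by auto
  qed simp
qed

lemma unimodular_chain_det2_growth_to_end:
  assumes chain: "unimodular_chain m X"
    and no_blowdown: "\<And>k. 0 < k \<Longrightarrow> k < m \<Longrightarrow> 2 \<le> det2 (X (k - 1)) (X (k + 1))"
    and "k \<le> m"
  shows "int m - int k \<le> det2 (X k) (X m)"
proof -
  let ?Y = "\<lambda>k. prod.swap (X (m - k))"
  have "2 \<le> det2 (?Y (k - 1)) (?Y (k + 1))" if "0 < k" "k < m" for k
  proof -
    have "m - (k - 1) = (m - k) + 1" "m - (k + 1) = (m - k) - 1" using that by auto
    then show ?thesis
      using no_blowdown[of "m - k"] that det2_antisym[of "X (m - k - 1)" "X (m - k + 1)"] by simp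
  qed
  then have "int (m - k) \<le> det2 (?Y 0) (?Y (m - k))"
    using unimodular_chain_det2_growth[OF unimodular_chain_reverse[OF chain]] by simp
  then show ?thesis using \<open>k \<le> m\<close> det2_antisym[of "X m" "X k"] by simp
qed

lemma int_sign_change:
  fixes f :: "nat \<Rightarrow> int"
  assumes "0 \<le> f 0" "f m < 0"
  shows "\<exists>k<m. 0 \<le> f k \<and> f (Suc k) < 0"
  using assms
proof (induction m)
  case (Suc m)
  then show ?case by (cases "f m < 0") (auto intro: less_SucI)
qed simp

text \<open>A chain without interior blow-downs spans an angle too wide to be bridged by a
  single vector z forming unimodular bases with both of its ends, unless it is short:
  writing z = a X k + b X (k+1) with a \<ge> 1, b \<ge> 0 at the position where z leaves the
  chain, the growth bounds give k \<le> 1 and m - k \<le> 1.\<close>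

lemma unimodular_chain_bridge_short:
  assumes chain: "unimodular_chain m X"
    and no_blowdown: "\<And>k. 0 < k \<Longrightarrow> k < m \<Longrightarrow> 2 \<le> det2 (X (k - 1)) (X (k + 1))"
    and start: "det2 (X 0) z = 1" and stop: "det2 z (X m) = 1"
  shows "m \<le> 2"
proof -
  obtain k where k: "k < m" "0 \<le> det2 (X k) z" "det2 (X (Suc k)) z < 0"
    using int_sign_change[of "\<lambda>k. det2 (X k) z" m] start stop det2_antisym[of z "X m"] by auto
  define a where "a = det2 z (X (Suc k))"
  define b where "b = det2 (X k) z"
  have a: "1 \<le> a" and b: "0 \<le> b"
    using k det2_antisym[of z "X (Suc k)"] by (simp_all add: a_def b_def)
  have basis: "det2 (X k) (X (Suc k)) = 1" using unimodular_chainD[OF chain k(1)] .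
  have "1 = a * det2 (X 0) (X k) + b * det2 (X 0) (X (Suc k))"
    using det2_cramer[of "X k" "X (Suc k)" "X 0" z] basis start by (simp add: a_def b_def)
  moreover have "int k \<le> det2 (X 0) (X k)" "int (Suc k) \<le> det2 (X 0) (X (Suc k))"
    using unimodular_chain_det2_growth[OF chain no_blowdown, of k]
      unimodular_chain_det2_growth[OF chain no_blowdown, of "Suc k"] k(1) by simp_all
  moreover have "det2 (X 0) (X k) \<le> a * det2 (X 0) (X k)"
    using a calculation(2) by (simp add: mult_le_cancel_right1)
  moreover have "0 \<le> b * det2 (X 0) (X (Suc k))"
    using b calculation(3) by simp
  ultimately have "int k \<le> 1" by linarith
  have "1 = a * det2 (X k) (X m) + b * det2 (X (Suc k)) (X m)"
    using det2_cramer[of "X k" "X (Suc k)" "X m" z] basis stop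
      det2_antisym[of "X m" z] det2_antisym[of "X m" "X k"] det2_antisym[of "X m" "X (Suc k)"]
    by (simp add: a_def b_def algebra_simps)
  moreover have "int m - int k \<le> det2 (X k) (X m)" "int m - int (Suc k) \<le> det2 (X (Suc k)) (X m)"
    using unimodular_chain_det2_growth_to_end[OF chain no_blowdown, of k]
      unimodular_chain_det2_growth_to_end[OF chain no_blowdown, of "Suc k"] k(1) by simp_all
  moreover have "det2 (X k) (X m) \<le> a * det2 (X k) (X m)"
    using a calculation(2) k(1) by (simp add: mult_le_cancel_right1)
  moreover have "0 \<le> b * det2 (X (Suc k)) (X m)"
    using b calculation(3) k(1) by simp
  ultimately have "int m - int k \<le> 1" by linarith
  with \<open>int k \<le> 1\<close> show ?thesis by linarith
qed

lemma half_turn_chain_blowdown_off_start: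
  assumes chain: "unimodular_chain m X" and opposite: "X m = - X 0"
    and inside: "\<And>k. 0 < k \<Longrightarrow> k < m \<Longrightarrow> 0 < det2 (X 0) (X k)"
    and "3 \<le> m"
  shows "\<exists>j. 2 \<le> j \<and> j < m \<and> det2 (X (j - 1)) (X (j + 1)) = 1"
proof (rule ccontr)
  assume none: "\<not> ?thesis"
  have turn: "0 < det2 (X (j - 1)) (X (j + 1))" if "0 < j" "j < m" for j
  proof (rule unimodular_chain_turn_pos[OF chain that])
    show "0 < det2 (X 0) (X j)" using inside that .
    have "0 \<le> det2 (X 0) (X (j - 1))"
      using inside[of "j - 1"] that by (cases "j = 1") (auto intro: less_imp_le)
    moreover have "0 \<le> det2 (X 0) (X (j + 1))"
      using inside[of "j + 1"] opposite that by (cases "j + 1 = m") (auto intro: less_imp_le)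
    moreover have "0 < det2 (X 0) (X (j - 1)) \<or> 0 < det2 (X 0) (X (j + 1))"
      using inside[of "j - 1"] inside[of "j + 1"] that \<open>3 \<le> m\<close> by (cases "j = 1") auto
    ultimately show "0 < det2 (X 0) (X (j - 1)) + det2 (X 0) (X (j + 1))" by linarith
  qed
  let ?Z = "\<lambda>k. X (k + 1)"
  have "m - 1 \<le> 2"
  proof (rule unimodular_chain_bridge_short)
    show "unimodular_chain (m - 1) ?Z"
      using chain by (simp add: unimodular_chain_def)
    show "2 \<le> det2 (?Z (k - 1)) (?Z (k + 1))" if "0 < k" "k < m - 1" for k
    proof -
      have "k - 1 + 1 = k" "2 \<le> k + 1" "k + 1 < m" using that by auto
      then show ?thesis using turn[of "k + 1"] none by fastforce
    qed
    have "det2 (X 0) (X 1) = 1" using unimodular_chainD[OF chain, of 0] \<open>3 \<le> m\<close> by simp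
    then show "det2 (?Z 0) (X 1 - X 0) = 1" "det2 (X 1 - X 0) (?Z (m - 1)) = 1"
      using opposite \<open>3 \<le> m\<close> det2_antisym[of "X 1" "X 0"]
      by (simp_all add: det2_diff_left det2_diff_right)
  qed
  then have "m = 3" using \<open>3 \<le> m\<close> by simp
  moreover have "det2 (X 1) (X 3) = 1"
    using unimodular_chainD[OF chain, of 0] opposite \<open>m = 3\<close> det2_antisym[of "X 1" "X 0"] by simp
  ultimately show False using none[unfolded not_ex, rule_format, of 2] by simp
qed

lemma half_turn_chain_blowdown_off_end:
  assumes chain: "unimodular_chain m X" and opposite: "X m = - X 0"
    and inside: "\<And>k. 0 < k \<Longrightarrow> k < m \<Longrightarrow> 0 < det2 (X 0) (X k)"
    and "3 \<le> m"
  shows "\<exists>j. 1 \<le> j \<and> j + 2 \<le> m \<and> det2 (X (j - 1)) (X (j + 1)) = 1"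
proof -
  let ?Y = "\<lambda>k. prod.swap (X (m - k))"
  have "?Y m = - ?Y 0" using opposite by (simp add: prod_eq_iff)
  moreover have "0 < det2 (?Y 0) (?Y k)" if "0 < k" "k < m" for k
    using inside[of "m - k"] that opposite det2_antisym[of "X m" "X (m - k)"] by simp
  ultimately obtain j where j: "2 \<le> j" "j < m" "det2 (?Y (j - 1)) (?Y (j + 1)) = 1"
    using half_turn_chain_blowdown_off_start[OF unimodular_chain_reverse[OF chain]] \<open>3 \<le> m\<close> by blast
  have "m - (j - 1) = (m - j) + 1" "m - (j + 1) = (m - j) - 1" using j by auto
  then have "det2 (X (m - j - 1)) (X (m - j + 1)) = 1"
    using j(3) det2_antisym[of "X (m - j - 1)" "X (m - j + 1)"] by simp
  then show ?thesis using j by (intro exI[of _ "m - j"]) auto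
qed

lemma mod_add_left_cancel_nat:
  fixes s j k n :: nat
  shows "(s + j) mod n = (s + k) mod n \<longleftrightarrow> j mod n = k mod n"
proof
  assume "(s + j) mod n = (s + k) mod n"
  then have "(int s + int j) mod int n = (int s + int k) mod int n"
    by (metis of_nat_add of_nat_mod)
  then have "(int s + int j + - int s) mod int n = (int s + int k + - int s) mod int n"
    by (rule mod_add_cong) simp
  then show "j mod n = k mod n"
    by (simp add: of_nat_mod [symmetric])
qed (rule mod_add_cong, simp_all)

text \<open>The conormals of a smooth polygon listed counterclockwise; outside_cone is convexity.\<close>

locale unimodular_cycle =
  fixes n :: nat and W :: "nat \<Rightarrow> int \<times> int"
  assumes det2_Suc: "det2 (W k) (W (Suc k)) = 1"
    and periodic: "W (k + n) = W k"
    and outside_cone: "j mod n \<noteq> k mod n \<Longrightarrow> j mod n \<noteq> Suc k mod n \<Longrightarrow>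
      det2 (W k) (W j) < 0 \<or> det2 (W j) (W (Suc k)) < 0"
begin

lemma shift: "unimodular_cycle n (\<lambda>k. W (s + k))"
proof
  show "det2 (W (s + k)) (W (s + Suc k)) = 1" for k
    using det2_Suc[of "s + k"] by simp
  show "W (s + (k + n)) = W (s + k)" for k
    using periodic[of "s + k"] by (simp add: add.assoc)
  show "det2 (W (s + k)) (W (s + j)) < 0 \<or> det2 (W (s + j)) (W (s + Suc k)) < 0"
    if "j mod n \<noteq> k mod n" "j mod n \<noteq> Suc k mod n" for j k
    using outside_cone[of "s + j" "s + k"] that mod_add_left_cancel_nat[of s j n "Suc k"]
    by (simp add: mod_add_left_cancel_nat)
qed

lemma chain: "unimodular_chain m (\<lambda>k. W (s + k))"
  using det2_Suc by (simp add: unimodular_chain_def)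

lemma det2_negative_propagates:
  assumes start: "det2 (W t) (W lo) < 0"
    and away: "\<And>k. lo \<le> k \<Longrightarrow> k < hi \<Longrightarrow> t mod n \<noteq> k mod n \<and> t mod n \<noteq> Suc k mod n"
    and "lo \<le> k" "k \<le> hi"
  shows "det2 (W t) (W k) < 0"
  using \<open>lo \<le> k\<close> \<open>k \<le> hi\<close>
proof (induction k rule: dec_induct)
  case (step k)
  then have "0 < det2 (W k) (W t)" using det2_antisym[of "W k" "W t"] by simp
  then show ?case using outside_cone[of t k] away[of k] step by fastforce
qed (use start in simp)

lemma three_term_sum:
  assumes "0 < j" "det2 (W (j - 1)) (W (j + 1)) = 1"
  shows "W (j - 1) + W (j + 1) = W j"
proof -
  have "det2 (W (j - 1)) (W j) = 1" "det2 (W j) (W (j + 1)) = 1"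
    using det2_Suc[of "j - 1"] det2_Suc[of j] \<open>0 < j\<close> by simp_all
  from three_term_components[OF this] show ?thesis
    using assms(2) by (simp add: prod_eq_iff)
qed

lemma half_turn_blowdown:
  assumes opposite: "W p = - W 0" and "0 < p" "p < n" "5 \<le> n"
  shows "\<exists>j. 2 \<le> j \<and> j + 2 \<le> n \<and> j \<noteq> p \<and> det2 (W (j - 1)) (W (j + 1)) = 1"
proof -
  have "p \<noteq> 1" using opposite det2_Suc[of 0] by auto
  show ?thesis
  proof (cases "3 \<le> p")
    case True
    have "0 < det2 (W 0) (W k)" if "0 < k" "k < p" for k
    proof -
      have "det2 (W p) (W k) < 0"
        by (rule det2_negative_propagates[of p 1 "p - 1"])
          (use opposite det2_Suc[of 0] \<open>p < n\<close> that in auto)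
      then show ?thesis using opposite by simp
    qed
    then obtain j where "2 \<le> j" "j < p" "det2 (W (j - 1)) (W (j + 1)) = 1"
      using half_turn_chain_blowdown_off_start[of p W] chain[of p 0] opposite True by auto
    then show ?thesis using \<open>p < n\<close> by (intro exI[of _ j]) auto
  next
    case False
    then have "p = 2" using \<open>0 < p\<close> \<open>p \<noteq> 1\<close> by simp
    let ?X = "\<lambda>k. W (2 + k)"
    have "2 + (n - 2) = n" using \<open>5 \<le> n\<close> by simp
    then have "?X (n - 2) = - ?X 0"
      using periodic[of 0] opposite \<open>p = 2\<close> by simp
    moreover have "0 < det2 (?X 0) (?X k)" if "0 < k" "k < n - 2" for k
    proof -
      have "det2 (W 0) (W (2 + k)) < 0"
        by (rule det2_negative_propagates[of 0 3 "n - 1"])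
          (use opposite \<open>p = 2\<close> det2_Suc[of 2] that in \<open>auto simp: numeral_3_eq_3\<close>)
      then show ?thesis using opposite \<open>p = 2\<close> by simp
    qed
    moreover have "3 \<le> n - 2" using \<open>5 \<le> n\<close> by simp
    ultimately obtain j where j: "1 \<le> j" "j + 2 \<le> n - 2" "det2 (?X (j - 1)) (?X (j + 1)) = 1"
      using half_turn_chain_blowdown_off_end[OF chain[of "n - 2" 2]] by blast
    have "2 + (j - 1) = j + 2 - 1" "2 + (j + 1) = j + 2 + 1" using j(1) by simp_all
    then show ?thesis
      using j \<open>p = 2\<close> by (intro exI[of _ "j + 2"]) auto
  qed
qed

text \<open>If the turn at W 1 is not convex, every later vector lies strictly on the
  clockwise side of W 0: otherwise it would be caught between W 0 and W 2.\<close>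

lemma concave_vertex_clockwise:
  assumes concave: "det2 (W 0) (W 2) \<le> 0" and "3 \<le> j" "j < n"
  shows "det2 (W 0) (W j) < 0"
proof (rule ccontr)
  assume "\<not> det2 (W 0) (W j) < 0"
  then have "det2 (W j) (W 1) < 0"
    using outside_cone[of j 0] assms(2,3) by fastforce
  then have "det2 (W j) (W 2) < 0"
    using outside_cone[of j 1] assms(2,3) det2_antisym[of "W 1" "W j"] by (fastforce simp: numeral_2_eq_2)
  moreover have "det2 (W j) (W 0) + det2 (W j) (W 2) = det2 (W 0) (W 2) * det2 (W j) (W 1)"
    using unimodular_chain_three_term[OF chain[of 2 0], of 1 "W j"] by (simp add: numeral_2_eq_2)
  moreover have "0 \<le> det2 (W 0) (W 2) * det2 (W j) (W 1)"
    using concave \<open>det2 (W j) (W 1) < 0\<close> by (simp add: mult_nonpos_nonpos)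
  ultimately show False
    using \<open>\<not> det2 (W 0) (W j) < 0\<close> det2_antisym[of "W j" "W 0"] by linarith
qed

lemma concave_vertex_blowdown:
  assumes "5 \<le> n" and concave: "det2 (W 0) (W 2) \<le> 0"
  shows "\<exists>j. 3 \<le> j \<and> j < n \<and> det2 (W (j - 1)) (W (j + 1)) = 1"
proof (rule ccontr)
  assume none: "\<not> ?thesis"
  note clockwise = concave_vertex_clockwise[OF concave]
  let ?X = "\<lambda>k. W (2 + k)"
  have "n - 2 \<le> 2"
  proof (rule unimodular_chain_bridge_short)
    show chain': "unimodular_chain (n - 2) ?X" by (rule chain)
    show "2 \<le> det2 (?X (k - 1)) (?X (k + 1))" if "0 < k" "k < n - 2" for k
    proof -
      have range: "2 + (k - 1) < n" "2 + (k + 1) \<le> n" using that by auto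
      have "det2 (W 0) (?X (k - 1)) \<le> 0"
        using clockwise[of "2 + (k - 1)"] concave range \<open>0 < k\<close> by (cases "k = 1") auto
      moreover have "det2 (W 0) (?X (k + 1)) \<le> 0"
        using clockwise[of "2 + (k + 1)"] periodic[of 0] range by (cases "2 + (k + 1) = n") auto
      moreover have "det2 (W 0) (?X (k - 1)) < 0 \<or> det2 (W 0) (?X (k + 1)) < 0"
        using clockwise[of "2 + (k - 1)"] clockwise[of "2 + (k + 1)"] range that \<open>5 \<le> n\<close>
        by (cases "k = 1") auto
      ultimately have "0 < det2 (- W 0) (?X (k - 1)) + det2 (- W 0) (?X (k + 1))"
        unfolding det2_uminus_left by linarith
      moreover have "0 < det2 (- W 0) (?X k)" using clockwise[of "2 + k"] range that by simp
      ultimately have "0 < det2 (?X (k - 1)) (?X (k + 1))"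
        using unimodular_chain_turn_pos[OF chain' that] by blast
      moreover have "2 + (k - 1) = (2 + k) - 1" "2 + (k + 1) = (2 + k) + 1" using that by simp_all
      ultimately show ?thesis using none[unfolded not_ex, rule_format, of "2 + k"] that by auto
    qed
    have "2 + (n - 2) = n" using \<open>5 \<le> n\<close> by simp
    then show "det2 (?X 0) (- W 1) = 1" "det2 (- W 1) (?X (n - 2)) = 1"
      using det2_Suc[of 0] det2_Suc[of 1] periodic[of 0]
        det2_antisym[of "W 2" "W 1"] det2_antisym[of "W 1" "W 0"]
      by (simp_all add: numeral_2_eq_2)
  qed
  then show False using \<open>5 \<le> n\<close> by simp
qed

end

lemma primitive_nonneg_multiple_eq:
  assumes "0 \<le> t" "primitive v" "primitive w" "v = (t * fst w, t * snd w)"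
  shows "v = w"
proof -
  have "gcd (t * fst w) (t * snd w) = \<bar>t\<bar> * gcd (fst w) (snd w)"
    by (simp add: gcd_mult_distrib_int)
  then have "t = 1" using assms by (simp add: primitive_def)
  then show ?thesis using assms(4) by simp
qed

lemma primitive_parallel:
  assumes "primitive v" "primitive w" "det2 v w = 0"
  shows "w = v \<or> w = - v"
proof -
  obtain x y where xy: "x * fst v + y * snd v = 1"
    using bezout_int[of "fst v" "snd v"] assms(1) by (auto simp: primitive_def)
  define c where "c = x * fst w + y * snd w"
  have par: "fst v * snd w = snd v * fst w" using assms(3) by (simp add: det2_def)
  have "c * fst v = fst w * (x * fst v + y * snd v)" "c * snd v = snd w * (x * fst v + y * snd v)"
    using par by (simp_all add: c_def algebra_simps)
  then have w: "w = (c * fst v, c * snd v)" using xy by (simp add: prod_eq_iff)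
  have "gcd (c * fst v) (c * snd v) = \<bar>c\<bar>"
    using gcd_mult_distrib_int[of c "fst v" "snd v"] assms(1) by (simp add: primitive_def)
  then have "\<bar>c\<bar> = 1" using assms(2) w by (simp add: primitive_def)
  then show ?thesis using w by (auto simp: abs_if prod_eq_iff split: if_splits)
qed

lemma pairing_lincomb:
  assumes "fst c = s * fst a + t * fst b" "snd c = s * snd a + t * snd b"
  shows "pairing c x = of_int s * pairing a x + of_int t * pairing b x"
  using assms by (simp add: pairing_def algebra_simps)

lemma pairing_eq_imp_eq:
  assumes "det2 v w \<noteq> 0" "pairing v x = pairing v y" "pairing w x = pairing w y"
  shows "x = y"
proof -
  let ?d1 = "fst x - fst y" and ?d2 = "snd x - snd y"
  have v: "of_int (fst v) * ?d1 + of_int (snd v) * ?d2 = 0"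
    and w: "of_int (fst w) * ?d1 + of_int (snd w) * ?d2 = 0"
    using assms(2,3) by (simp_all add: pairing_def algebra_simps)
  have "of_int (det2 v w) * ?d1 = of_int (snd w) * (of_int (fst v) * ?d1 + of_int (snd v) * ?d2)
      - of_int (snd v) * (of_int (fst w) * ?d1 + of_int (snd w) * ?d2)"
    "of_int (det2 v w) * ?d2 = of_int (fst v) * (of_int (fst w) * ?d1 + of_int (snd w) * ?d2)
      - of_int (fst w) * (of_int (fst v) * ?d1 + of_int (snd v) * ?d2)"
    by (simp_all add: det2_def algebra_simps)
  then have "of_int (det2 v w) * ?d1 = 0" "of_int (det2 v w) * ?d2 = 0"
    using v w by simp_all
  then show ?thesis using assms(1) by (simp add: prod_eq_iff)
qed

text \<open>If the conormal of edge j is a nonnegative combination of the conormals at the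
  vertex p between edges i and k, then pairing with it is maximised at p, so edge j
  lies on the lines of those edges where its coefficient is positive.\<close>

lemma edge_on_vertex_lines:
  assumes "i < n" "j < n" "k < n" "0 \<le> s" "0 \<le> t"
    and comb: "fst (eta j) = s * fst (eta i) + t * fst (eta k)"
      "snd (eta j) = s * snd (eta i) + t * snd (eta k)"
    and p: "p \<in> edge_set n eta kappa i" "p \<in> edge_set n eta kappa k"
    and z: "z \<in> edge_set n eta kappa j"
  shows "(0 < s \<longrightarrow> pairing (eta i) z = kappa i) \<and> (0 < t \<longrightarrow> pairing (eta k) z = kappa k)"
proof -
  let ?a = "eta i" and ?b = "eta k"
  have "pairing ?a z \<le> kappa i" "pairing ?b z \<le> kappa k" "pairing (eta j) z = kappa j"
    using z \<open>i < n\<close> \<open>k < n\<close> by (auto simp: edge_set_def polygon_set_def)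
  moreover have "pairing (eta j) p \<le> kappa j" "pairing ?a p = kappa i" "pairing ?b p = kappa k"
    using p \<open>j < n\<close> by (auto simp: edge_set_def polygon_set_def)
  moreover have "pairing (eta j) q = of_int s * pairing ?a q + of_int t * pairing ?b q" for q
    using comb by (rule pairing_lincomb)
  ultimately have "of_int s * (kappa i - pairing ?a z) + of_int t * (kappa k - pairing ?b z) \<le> 0"
    and "0 \<le> kappa i - pairing ?a z" "0 \<le> kappa k - pairing ?b z"
    by (simp_all add: algebra_simps)
  moreover have "0 \<le> of_int s * (kappa i - pairing ?a z)" "0 \<le> of_int t * (kappa k - pairing ?b z)"
    using calculation(2,3) \<open>0 \<le> s\<close> \<open>0 \<le> t\<close> by simp_all
  ultimately have "of_int s * (kappa i - pairing ?a z) = 0" "of_int t * (kappa k - pairing ?b z) = 0"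
    by linarith+
  then show ?thesis by auto
qed

text \<open>With both coefficients positive, the edge would collapse to the vertex.\<close>

lemma smooth_polygon_conormal_in_vertex_cone:
  assumes sp: "smooth_polygon n eta kappa" and "i < n" "j < n" "0 \<le> s" "0 \<le> t"
    and comb: "eta j = (s * fst (eta i) + t * fst (eta (nxt n i)), s * snd (eta i) + t * snd (eta (nxt n i)))"
  shows "j = i \<or> j = nxt n i"
proof (rule ccontr)
  assume other: "\<not> (j = i \<or> j = nxt n i)"
  let ?a = "eta i" and ?b = "eta (nxt n i)" and ?E = "edge_set n eta kappa"
  have "nxt n i < n" using \<open>i < n\<close> by (simp add: nxt_def)
  have prims: "\<forall>i<n. primitive (eta i)" and inj: "inj_on eta {..<n}"
    and "\<bar>det2 ?a ?b\<bar> = 1"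
    using sp \<open>i < n\<close> unfolding smooth_polygon_def by auto
  obtain p where p: "p \<in> ?E i" "p \<in> ?E (nxt n i)"
    using sp \<open>i < n\<close> unfolding smooth_polygon_def by blast
  obtain x y where xy: "x \<in> ?E j" "y \<in> ?E j" "x \<noteq> y"
    using sp \<open>j < n\<close> unfolding smooth_polygon_def by blast
  have on_lines: "(0 < s \<longrightarrow> pairing ?a z = kappa i) \<and> (0 < t \<longrightarrow> pairing ?b z = kappa (nxt n i))"
    if "z \<in> ?E j" for z
    using edge_on_vertex_lines[OF \<open>i < n\<close> \<open>j < n\<close> \<open>nxt n i < n\<close> \<open>0 \<le> s\<close> \<open>0 \<le> t\<close> _ _ p that] comb
    by simp
  consider "0 < s" "0 < t" | "s = 0" | "t = 0" using \<open>0 \<le> s\<close> \<open>0 \<le> t\<close> by linarith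
  then show False
  proof cases
    case 1
    have "det2 ?a ?b \<noteq> 0" using \<open>\<bar>det2 ?a ?b\<bar> = 1\<close> by auto
    then have "x = y" by (rule pairing_eq_imp_eq) (use on_lines[OF xy(1)] on_lines[OF xy(2)] 1 in auto)
    then show False using xy(3) by simp
  next
    case 2
    have "eta j = ?b"
    proof (rule primitive_nonneg_multiple_eq[OF \<open>0 \<le> t\<close>])
      show "primitive (eta j)" "primitive ?b" using prims \<open>j < n\<close> \<open>nxt n i < n\<close> by simp_all
    qed (use comb 2 in simp)
    then show False using inj other \<open>j < n\<close> \<open>nxt n i < n\<close> by (auto dest: inj_onD)
  next
    case 3
    have "eta j = ?a"
    proof (rule primitive_nonneg_multiple_eq[OF \<open>0 \<le> s\<close>])
      show "primitive (eta j)" "primitive ?a" using prims \<open>j < n\<close> \<open>i < n\<close> by simp_all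
    qed (use comb 3 in simp)
    then show False using inj other \<open>j < n\<close> \<open>i < n\<close> by (auto dest: inj_onD)
  qed
qed

lemma smooth_polygon_outside_vertex_cone:
  assumes sp: "smooth_polygon n eta kappa" and "i < n" "j < n" "j \<noteq> i" "j \<noteq> nxt n i"
  defines "\<sigma> \<equiv> det2 (eta i) (eta (nxt n i))"
  shows "\<sigma> * det2 (eta i) (eta j) < 0 \<or> \<sigma> * det2 (eta j) (eta (nxt n i)) < 0"
proof (rule ccontr)
  let ?a = "eta i" and ?b = "eta (nxt n i)" and ?c = "eta j"
  assume "\<not> ?thesis"
  then have nonneg: "0 \<le> \<sigma> * det2 ?c ?b" "0 \<le> \<sigma> * det2 ?a ?c" by auto
  have "\<bar>\<sigma>\<bar> = 1" using sp \<open>i < n\<close> unfolding smooth_polygon_def \<sigma>_def by auto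
  then have "\<sigma> * \<sigma> = 1" by (metis abs_mult_self_eq mult_1)
  moreover have "\<sigma> * fst ?c = det2 ?c ?b * fst ?a + det2 ?a ?c * fst ?b"
    "\<sigma> * snd ?c = det2 ?c ?b * snd ?a + det2 ?a ?c * snd ?b"
    using det2_cramer_components[of ?a ?b ?c] unfolding \<sigma>_def by simp_all
  ultimately have "fst ?c = \<sigma> * (det2 ?c ?b * fst ?a + det2 ?a ?c * fst ?b)"
    "snd ?c = \<sigma> * (det2 ?c ?b * snd ?a + det2 ?a ?c * snd ?b)"
    by (metis mult.assoc mult_1)+
  then have "?c = ((\<sigma> * det2 ?c ?b) * fst ?a + (\<sigma> * det2 ?a ?c) * fst ?b,
      (\<sigma> * det2 ?c ?b) * snd ?a + (\<sigma> * det2 ?a ?c) * snd ?b)"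
    by (simp add: prod_eq_iff distrib_left mult.assoc)
  then have "j = i \<or> j = nxt n i"
    using smooth_polygon_conormal_in_vertex_cone[OF sp \<open>i < n\<close> \<open>j < n\<close> nonneg] by blast
  then show False using assms(4,5) by blast
qed

lemma nxt_nxt_distinct:
  assumes "3 \<le> n" "i < n"
  shows "nxt n i \<noteq> i" "nxt n (nxt n i) \<noteq> i" "nxt n (nxt n i) \<noteq> nxt n i"
proof -
  have "nxt n i = (i + 1) mod n" "nxt n (nxt n i) = (i + 2) mod n" "i = (i + 0) mod n"
    using assms by (simp_all add: nxt_def mod_Suc_eq)
  moreover have "1 mod n \<noteq> 0 mod n" "2 mod n \<noteq> 0 mod n" "2 mod n \<noteq> 1 mod n"
    using assms(1) by simp_all
  ultimately show "nxt n i \<noteq> i" "nxt n (nxt n i) \<noteq> i" "nxt n (nxt n i) \<noteq> nxt n i"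
    by (metis mod_add_left_cancel_nat)+
qed

lemma smooth_polygon_orientation_nxt:
  assumes sp: "smooth_polygon n eta kappa" and "i < n"
  shows "det2 (eta (nxt n i)) (eta (nxt n (nxt n i))) = det2 (eta i) (eta (nxt n i))"
proof (rule ccontr)
  let ?a = "eta i" and ?b = "eta (nxt n i)" and ?c = "eta (nxt n (nxt n i))"
  assume "det2 ?b ?c \<noteq> det2 ?a ?b"
  have "3 \<le> n" using sp by (simp add: smooth_polygon_def)
  have "nxt n i < n" "nxt n (nxt n i) < n" using \<open>i < n\<close> by (simp_all add: nxt_def)
  have "\<bar>det2 ?a ?b\<bar> = 1" "\<bar>det2 ?b ?c\<bar> = 1"
    using sp \<open>i < n\<close> \<open>nxt n i < n\<close> unfolding smooth_polygon_def by auto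
  with \<open>det2 ?b ?c \<noteq> det2 ?a ?b\<close> have flip: "det2 ?b ?c = - det2 ?a ?b" "det2 ?a ?b * det2 ?a ?b = 1"
    by (auto simp: abs_eq_iff) (metis abs_mult_self_eq mult_1)
  have "det2 ?a ?b * det2 ?a ?c < 0 \<or> det2 ?a ?b * det2 ?c ?b < 0"
    using smooth_polygon_outside_vertex_cone[OF sp \<open>i < n\<close> \<open>nxt n (nxt n i) < n\<close>]
      nxt_nxt_distinct[OF \<open>3 \<le> n\<close> \<open>i < n\<close>] by simp
  moreover have "det2 ?a ?b * det2 ?c ?b = 1"
    using flip det2_antisym[of ?c ?b] by simp
  ultimately have "det2 ?a ?b * det2 ?a ?c < 0" by linarith
  have "det2 ?b ?c * det2 ?b ?a < 0 \<or> det2 ?b ?c * det2 ?a ?c < 0"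
    using smooth_polygon_outside_vertex_cone[OF sp \<open>nxt n i < n\<close> \<open>i < n\<close>]
      nxt_nxt_distinct[OF \<open>3 \<le> n\<close> \<open>i < n\<close>] by simp
  moreover have "det2 ?b ?c * det2 ?b ?a = 1"
    using flip det2_antisym[of ?b ?a] by simp
  ultimately have "det2 ?b ?c * det2 ?a ?c < 0" by linarith
  then show False using \<open>det2 ?a ?b * det2 ?a ?c < 0\<close> flip(1) by simp
qed

lemma smooth_polygon_orientation:
  assumes sp: "smooth_polygon n eta kappa" and "i < n"
  shows "det2 (eta i) (eta (nxt n i)) = det2 (eta 0) (eta (nxt n 0))"
  using \<open>i < n\<close>
proof (induction i)
  case (Suc i)
  then have "nxt n i = Suc i" by (simp add: nxt_def)
  then show ?case using smooth_polygon_orientation_nxt[OF sp, of i] Suc by simp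
qed simp

definition orient :: "int \<Rightarrow> int \<times> int \<Rightarrow> int \<times> int" where
  "orient \<sigma> = (if \<sigma> = 1 then id else prod.swap)"

lemma det2_orient: "\<sigma> = 1 \<or> \<sigma> = -1 \<Longrightarrow> det2 (orient \<sigma> v) (orient \<sigma> w) = \<sigma> * det2 v w"
  by (auto simp: orient_def det2_def)

lemma orient_add: "orient \<sigma> (v + w) = orient \<sigma> v + orient \<sigma> w"
  and orient_uminus: "orient \<sigma> (- v) = - orient \<sigma> v"
  and orient_orient: "orient \<sigma> (orient \<sigma> v) = v"
  by (simp_all add: orient_def prod_eq_iff)

lemma positive_combination_orient:
  "positive_combination (orient \<sigma> v) (orient \<sigma> a) (orient \<sigma> b) \<longleftrightarrow> positive_combination v a b"
  unfolding positive_combination_def orient_def by (simp add: conj_commute)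

lemma smooth_polygon_unimodular_cycle:
  assumes sp: "smooth_polygon n eta kappa"
  defines "\<sigma> \<equiv> det2 (eta 0) (eta (nxt n 0))"
  shows "unimodular_cycle n (\<lambda>k. orient \<sigma> (eta (k mod n)))"
proof
  have "0 < n" using sp by (simp add: smooth_polygon_def)
  have nxt_mod: "nxt n (k mod n) = Suc k mod n" for k by (simp add: nxt_def mod_Suc_eq)
  have orientation: "det2 (eta (k mod n)) (eta (Suc k mod n)) = \<sigma>" for k
    using smooth_polygon_orientation[OF sp, of "k mod n"] \<open>0 < n\<close> by (simp add: nxt_mod \<sigma>_def)
  have "\<bar>\<sigma>\<bar> = 1" using sp \<open>0 < n\<close> unfolding smooth_polygon_def \<sigma>_def by auto
  then have \<sigma>: "\<sigma> = 1 \<or> \<sigma> = -1" by auto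
  show "det2 (orient \<sigma> (eta (k mod n))) (orient \<sigma> (eta (Suc k mod n))) = 1" for k
  proof -
    have "det2 (orient \<sigma> (eta (k mod n))) (orient \<sigma> (eta (Suc k mod n))) = \<sigma> * \<sigma>"
      using det2_orient[OF \<sigma>] orientation[of k] by simp
    then show ?thesis using \<sigma> by auto
  qed
  show "orient \<sigma> (eta ((k + n) mod n)) = orient \<sigma> (eta (k mod n))" for k
    by simp
  show "det2 (orient \<sigma> (eta (k mod n))) (orient \<sigma> (eta (j mod n))) < 0 \<or>
      det2 (orient \<sigma> (eta (j mod n))) (orient \<sigma> (eta (Suc k mod n))) < 0"
    if "j mod n \<noteq> k mod n" "j mod n \<noteq> Suc k mod n" for j k
  proof -
    have "\<sigma> * det2 (eta (k mod n)) (eta (j mod n)) < 0 \<or> \<sigma> * det2 (eta (j mod n)) (eta (Suc k mod n)) < 0"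
      using smooth_polygon_outside_vertex_cone[OF sp, of "k mod n" "j mod n"] that \<open>0 < n\<close>
      unfolding nxt_mod orientation by simp
    then show ?thesis unfolding det2_orient[OF \<sigma>] .
  qed
qed

lemma prv_mod: "0 < n \<Longrightarrow> 0 < j \<Longrightarrow> prv n (j mod n) = (j - 1) mod n"
proof -
  assume "0 < n" "0 < j"
  then have "(j mod n + n - 1) mod n = (j mod n + (n - 1)) mod n" by simp
  also have "\<dots> = (j + (n - 1)) mod n" by (simp add: mod_add_left_eq)
  also have "j + (n - 1) = j - 1 + n" using \<open>0 < n\<close> \<open>0 < j\<close> by simp
  finally show ?thesis by (simp add: prv_def)
qed

lemma can_blow_down_if_orient_sum:
  assumes "0 < n" "0 < j"
    and "orient \<sigma> (eta ((j - 1) mod n)) + orient \<sigma> (eta ((j + 1) mod n)) = orient \<sigma> (eta (j mod n))"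
  shows "can_blow_down n eta (j mod n)"
proof -
  have "eta ((j - 1) mod n) + eta ((j + 1) mod n) = eta (j mod n)"
    using arg_cong[OF assms(3), of "orient \<sigma>"] by (simp add: orient_add orient_orient)
  moreover have "nxt n (j mod n) = (j + 1) mod n" by (simp add: nxt_def mod_Suc_eq)
  ultimately show ?thesis using prv_mod[OF assms(1,2)] by (simp add: can_blow_down_def prod_eq_iff)
qed

lemma smooth_polygon_concave_vertex_blowdown:
  assumes sp: "smooth_polygon n eta kappa" and "4 < n" "i < n"
    and not_convex: "\<not> positive_combination (eta i) (eta (prv n i)) (eta (nxt n i))"
  shows "\<exists>f<n. f \<noteq> prv n i \<and> f \<noteq> i \<and> f \<noteq> nxt n i \<and> can_blow_down n eta f"
proof -
  define \<sigma> where "\<sigma> = det2 (eta 0) (eta (nxt n 0))"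
  define s where "s = i + n - 1"
  let ?W = "\<lambda>k. orient \<sigma> (eta (k mod n))"
  interpret cycle: unimodular_cycle n ?W
    using smooth_polygon_unimodular_cycle[OF sp] by (simp add: \<sigma>_def)
  interpret shifted: unimodular_cycle n "\<lambda>k. ?W (s + k)"
    by (rule cycle.shift)
  have "s + 1 = i + n" "s + 2 = (i + 1) + n" using \<open>4 < n\<close> by (simp_all add: s_def)
  then have idx: "(s + 0) mod n = prv n i" "(s + 1) mod n = i" "(s + 2) mod n = nxt n i"
    using \<open>i < n\<close> by (simp add: s_def prv_def, simp, simp only: mod_add_self2 nxt_def)
  have "det2 (?W (s + 0)) (?W (s + 2)) \<le> 0"
  proof (rule ccontr)
    assume "\<not> ?thesis"
    then have "positive_combination (?W (s + 1)) (?W (s + 0)) (?W (s + 2))"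
      using positive_combination_if_det2_pos shifted.det2_Suc[of 0] shifted.det2_Suc[of 1]
      by (simp add: numeral_2_eq_2)
    then show False using not_convex idx by (simp add: positive_combination_orient)
  qed
  then obtain j where j: "3 \<le> j" "j < n" "det2 (?W (s + (j - 1))) (?W (s + (j + 1))) = 1"
    using shifted.concave_vertex_blowdown \<open>4 < n\<close> by auto
  have "?W (s + j - 1) + ?W (s + j + 1) = ?W (s + j)"
    using cycle.three_term_sum[of "s + j"] j by (simp add: add.assoc)
  then have "can_blow_down n eta ((s + j) mod n)"
    using can_blow_down_if_orient_sum[of n "s + j"] j by simp
  moreover have "(s + j) mod n \<noteq> (s + 0) mod n" "(s + j) mod n \<noteq> (s + 1) mod n"
    "(s + j) mod n \<noteq> (s + 2) mod n"
    using j by (simp_all only: mod_add_left_cancel_nat) simp_all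
  ultimately show ?thesis
    unfolding idx using \<open>i < n\<close> by (intro exI[of _ "(s + j) mod n"]) auto
qed

lemma smooth_polygon_parallel_edges_blowdown:
  assumes sp: "smooth_polygon n eta kappa" and "4 < n" "e < n" "e' < n" "e \<noteq> e'"
    and parallel: "parallel_edges eta e e'"
  shows "\<exists>f<n. f \<noteq> e \<and> f \<noteq> e' \<and> \<not> adjacent_edges n e f \<and> can_blow_down n eta f"
proof -
  define \<sigma> where "\<sigma> = det2 (eta 0) (eta (nxt n 0))"
  define p where "p = (e' + n - e) mod n"
  let ?W = "\<lambda>k. orient \<sigma> (eta (k mod n))"
  interpret cycle: unimodular_cycle n ?W
    using smooth_polygon_unimodular_cycle[OF sp] by (simp add: \<sigma>_def)
  interpret shifted: unimodular_cycle n "\<lambda>k. ?W (e + k)"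
    by (rule cycle.shift)
  have "eta e' = eta e \<or> eta e' = - eta e"
    using primitive_parallel sp parallel \<open>e < n\<close> \<open>e' < n\<close>
    by (auto simp: smooth_polygon_def parallel_edges_def)
  moreover have "eta e' \<noteq> eta e"
    using sp \<open>e < n\<close> \<open>e' < n\<close> \<open>e \<noteq> e'\<close> by (auto simp: smooth_polygon_def dest: inj_onD)
  ultimately have opposite: "eta e' = - eta e" by simp
  have "(e + p) mod n = (e + (e' + n - e)) mod n" by (simp add: p_def mod_add_right_eq)
  also have "e + (e' + n - e) = e' + n" using \<open>e < n\<close> by simp
  finally have ep: "(e + p) mod n = e'" using \<open>e' < n\<close> by simp
  have "0 < p" "p < n"
    using ep \<open>e < n\<close> \<open>e \<noteq> e'\<close> by (auto simp: p_def intro: Nat.gr0I)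
  have "?W (e + p) = - ?W (e + 0)"
    using ep opposite \<open>e < n\<close> by (simp add: orient_uminus)
  then obtain j where j: "2 \<le> j" "j + 2 \<le> n" "j \<noteq> p" "det2 (?W (e + (j - 1))) (?W (e + (j + 1))) = 1"
    using shifted.half_turn_blowdown[OF _ \<open>0 < p\<close> \<open>p < n\<close>] \<open>4 < n\<close> by fastforce
  have "?W (e + j - 1) + ?W (e + j + 1) = ?W (e + j)"
    using cycle.three_term_sum[of "e + j"] j by (simp add: add.assoc)
  then have "can_blow_down n eta ((e + j) mod n)"
    using can_blow_down_if_orient_sum[of n "e + j"] j by simp
  moreover have "(e + j) mod n \<noteq> (e + 0) mod n" "(e + j) mod n \<noteq> (e + p) mod n"
    "(e + j) mod n \<noteq> (e + 1) mod n" "(e + j) mod n \<noteq> (e + (n - 1)) mod n"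
    using j \<open>p < n\<close> by (simp_all only: mod_add_left_cancel_nat) simp_all
  moreover have idx: "(e + 0) mod n = e" "(e + 1) mod n = nxt n e" "(e + (n - 1)) mod n = prv n e"
    using \<open>e < n\<close> by (simp_all add: nxt_def prv_def)
  ultimately show ?thesis
    unfolding adjacent_edges_def idx ep using \<open>e < n\<close> by (intro exI[of _ "(e + j) mod n"]) auto
qed

theorem lemma2p46:
  fixes n :: nat and eta :: "nat \<Rightarrow> int \<times> int" and kappa :: "nat \<Rightarrow> real"
  assumes "smooth_polygon n eta kappa" and "n > 4"
  shows "(\<forall>e<n. \<forall>e'<n. e \<noteq> e' \<and> parallel_edges eta e e' \<longrightarrow>
            (\<exists>f<n. f \<noteq> e \<and> f \<noteq> e' \<and> \<not> adjacent_edges n e f \<and> can_blow_down n eta f))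
       \<and> (\<forall>i<n. \<not> positive_combination (eta i) (eta (prv n i)) (eta (nxt n i)) \<longrightarrow>
            (\<exists>f<n. f \<noteq> prv n i \<and> f \<noteq> i \<and> f \<noteq> nxt n i \<and> can_blow_down n eta f))"
  using smooth_polygon_parallel_edges_blowdown[OF assms]
    smooth_polygon_concave_vertex_blowdown[OF assms]
  by blast

end
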